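(* Let $\lambda=(\lambda_1,\dots,\lambda_d)$ be a partition of $n\ge2$ such that $\gcd(n-1,\lambda_t)=1$ for every $t$. Then for distinct $i,j\in\{1,\dots,n-2\}$, we have $i\preceq j$ in $P(\lambda)$ if and only if $i<j$ and $s_{t,i}>s_{t,j}>0$ for every $t\in\{1,\dots,d\}$.
   Context: $\Delta_\lambda=\mathrm{conv}(e_1,\dots,e_d,\lambda)\subset\mathbb{R}^d$, with fundamental parallelepiped $\Pi_\lambda=\{\sum_{i=1}^d\gamma_i(1,e_i)+\gamma_{d+1}(1,\lambda):0\le\gamma_i<1\}\subset\mathbb{R}^{d+1}$. $P(\lambda)$ is $\Pi_\lambda\cap\mathbb{Z}^{d+1}$ ordered by $\sigma\preceq\mu$ iff $\mu-\sigma\in\Pi_\lambda\cap\mathbb{Z}^{d+1}$. For $0\le b<n-1$ set $p(b)=\left(\sum_{t}\lceil b\lambda_t/(n-1)\rceil-b,\ \lceil b\lambda_1/(n-1)\rceil,\dots,\lceil b\lambda_d/(n-1)\rceil\right)$; $b\mapsto p(b)$ is a bijection from $\{0,\dots,n-2\}$ onto $\Pi_\lambda\cap\mathbb{Z}^{d+1}$ and each integer $b$ is identified with $p(b)$. For $0\le i<n-1$ and $1\le t\le d$, the integers $r_{t,i}\ge0$ and $0\le s_{t,i}<n-1$ are defined by $i\lambda_t=r_{t,i}(n-1)+s_{t,i}$. *)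

theory Defs
  imports Complex_Main
begin

text \<open>A partition of n: weakly decreasing list of positive parts summing to n.
  lam ! (t-1) is the part lambda_t, for t = 1..d with d = length lam.\<close>
definition is_partition :: "nat \<Rightarrow> nat list \<Rightarrow> bool" where
  "is_partition n lam \<longleftrightarrow> sorted (rev lam) \<and> (\<forall>x\<in>set lam. 0 < x) \<and> sum_list lam = n"

text \<open>Points of R^(d+1) are functions on coordinates 0..d (coordinate 0 is the
  leading one).  Membership in the fundamental parallelepiped Pi_lambda.\<close>
definition in_Pi :: "nat list \<Rightarrow> (nat \<Rightarrow> real) \<Rightarrow> bool" where
  "in_Pi lam x \<longleftrightarrow>
    (\<exists>g :: nat \<Rightarrow> real.
       (\<forall>k\<in>{1..length lam + 1}. 0 \<le> g k \<and> g k < 1) \<and>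
       x 0 = (\<Sum>k=1..length lam + 1. g k) \<and>
       (\<forall>t\<in>{1..length lam}. x t = g t + g (length lam + 1) * real (lam ! (t - 1))))"

definition pt :: "nat list \<Rightarrow> nat \<Rightarrow> nat \<Rightarrow> nat \<Rightarrow> int" where
  "pt lam n b k =
    (if k = 0 then (\<Sum>t=1..length lam. \<lceil>real b * real (lam ! (t - 1)) / real (n - 1)\<rceil>) - int b
     else if k \<le> length lam then \<lceil>real b * real (lam ! (k - 1)) / real (n - 1)\<rceil>
     else 0)"

text \<open>The order of P(lambda), transported to integers b via b \<mapsto> p(b):
  sigma \<preceq> mu iff mu - sigma lies in Pi_lambda \<inter> Z^(d+1).\<close>
definition P_le :: "nat list \<Rightarrow> nat \<Rightarrow> nat \<Rightarrow> nat \<Rightarrow> bool" where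
  "P_le lam n i j \<longleftrightarrow> in_Pi lam (\<lambda>k. real_of_int (pt lam n j k - pt lam n i k))"

definition s_rem :: "nat list \<Rightarrow> nat \<Rightarrow> nat \<Rightarrow> nat \<Rightarrow> nat" where
  "s_rem lam n t i = (i * lam ! (t - 1)) mod (n - 1)"

end

(* Put N = n - 1 and c = (j - i) / N. Summing the coordinates of p(j) - p(i) shows that in
   any representation of p(j) - p(i) as a combination of the generators of the parallelepiped,
   the coefficient of (1, lambda) must be c; the remaining coefficients are then forced, so
   i is below j iff 0 <= c < 1 and ceil(j lambda_t / N) - ceil(i lambda_t / N) = ceil(c lambda_t)
   for every t. Writing i lambda_t = r N + s, each ceiling is r plus [s > 0]; coprimality makes
   s_{t,i} and s_{t,j} nonzero and distinct, and the identity then holds exactly when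
   s_{t,j} < s_{t,i}. *)

theory Submission
  imports Defs
begin

lemma ceiling_quotient_eq:
  fixes N :: nat and q s :: int
  assumes "-int N < s" "s < int N"
  shows "\<lceil>real_of_int (q * int N + s) / real N\<rceil> = q + (if s > 0 then 1 else 0)"
proof -
  have N: "N > 0" using assms by linarith
  have "real_of_int (q * int N + s) / real N = real_of_int s / real N + real_of_int q"
    using N by (simp add: field_simps)
  moreover have "\<lceil>real_of_int s / real N\<rceil> = (if s > 0 then 1 else 0)"
    using assms N by (auto simp: ceiling_eq_iff divide_simps)
  ultimately show ?thesis by simp
qed

lemma ceiling_diff_eq_iff_mod_less:
  fixes N a i j :: nat
  assumes "0 < N" "0 < i * a mod N" "0 < j * a mod N" "i * a mod N \<noteq> j * a mod N"
  shows "\<lceil>real j * real a / real N\<rceil> - \<lceil>real i * real a / real N\<rceil>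
           = \<lceil>(real j - real i) * real a / real N\<rceil> \<longleftrightarrow> j * a mod N < i * a mod N"
proof -
  define ri rj where "ri = int (i * a div N)" and "rj = int (j * a div N)"
  define si sj where "si = int (i * a mod N)" and "sj = int (j * a mod N)"
  have i_split: "real i * real a = real_of_int (ri * int N + si)"
    unfolding ri_def si_def by (metis div_mult_mod_eq of_int_of_nat_eq of_nat_add of_nat_mult)
  have j_split: "real j * real a = real_of_int (rj * int N + sj)"
    unfolding rj_def sj_def by (metis div_mult_mod_eq of_int_of_nat_eq of_nat_add of_nat_mult)
  have diff_split: "(real j - real i) * real a = real_of_int ((rj - ri) * int N + (sj - si))"
    using i_split j_split by (simp add: algebra_simps)
  have "0 < si" "si < int N" "0 < sj" "sj < int N"
    using assms unfolding si_def sj_def by auto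
  then have "\<lceil>real i * real a / real N\<rceil> = ri + 1" "\<lceil>real j * real a / real N\<rceil> = rj + 1"
    and "\<lceil>(real j - real i) * real a / real N\<rceil> = rj - ri + (if sj > si then 1 else 0)"
    unfolding i_split j_split diff_split by (simp_all only: ceiling_quotient_eq) auto
  then show ?thesis using assms(4) unfolding si_def sj_def by auto
qed

lemma coprime_mult_mod_pos:
  fixes N a b :: nat
  assumes "coprime N a" "0 < b" "b < N"
  shows "0 < b * a mod N"
proof (rule ccontr)
  assume "\<not> 0 < b * a mod N"
  then have "N dvd b" using assms(1) by (simp add: coprime_dvd_mult_left_iff mod_eq_0_iff_dvd)
  then show False using assms(2,3) by (auto dest: dvd_imp_le)
qed

lemma coprime_mult_mod_inj:
  fixes N a i j :: nat
  assumes "coprime N a" "i < j" "j < N"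
  shows "i * a mod N \<noteq> j * a mod N"
proof
  assume "i * a mod N = j * a mod N"
  then have "N dvd (j - i) * a"
    using assms(2) by (metis diff_mult_distrib less_or_eq_imp_le mod_eq_dvd_iff_nat mult_le_mono1)
  then have "N dvd j - i" using assms(1) by (simp add: coprime_dvd_mult_left_iff)
  then show False using assms(2,3) by (auto dest: dvd_imp_le)
qed

lemma in_Pi_iff:
  "in_Pi lam x \<longleftrightarrow> (\<exists>c. 0 \<le> c \<and> c < 1 \<and>
     (\<forall>t\<in>{1..length lam}. 0 \<le> x t - c * real (lam ! (t - 1)) \<and> x t - c * real (lam ! (t - 1)) < 1) \<and>
     x 0 = (\<Sum>t=1..length lam. x t) - c * (real (sum_list lam) - 1))"
    (is "_ \<longleftrightarrow> (\<exists>c. ?coeff c)")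
proof -
  define d where "d = length lam"
  have sum_lam: "(\<Sum>t=1..d. real (lam ! (t - 1))) = real (sum_list lam)"
    unfolding d_def by (simp add: sum.atLeast1_atMost_eq sum_list_sum_nth atLeast0LessThan)
  have sum_g: "(\<Sum>k=1..d + 1. g k) = (\<Sum>t=1..d. x t) - c * (real (sum_list lam) - 1)"
    if "\<forall>t\<in>{1..d}. x t = g t + c * real (lam ! (t - 1))" "g (d + 1) = c" for g c
  proof -
    have "(\<Sum>t=1..d. g t) = (\<Sum>t=1..d. x t - c * real (lam ! (t - 1)))"
      using that(1) by (intro sum.cong) auto
    also have "\<dots> = (\<Sum>t=1..d. x t) - c * real (sum_list lam)"
      using sum_lam by (simp add: sum_subtractf sum_distrib_left[symmetric])
    finally show ?thesis using that(2) by (simp add: algebra_simps)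
  qed
  show ?thesis
  proof
    assume "in_Pi lam x"
    then obtain g where g: "\<forall>k\<in>{1..d + 1}. 0 \<le> g k \<and> g k < 1"
      "x 0 = (\<Sum>k=1..d + 1. g k)" "\<forall>t\<in>{1..d}. x t = g t + g (d + 1) * real (lam ! (t - 1))"
      unfolding in_Pi_def d_def by blast
    have "x 0 = (\<Sum>t=1..d. x t) - g (d + 1) * (real (sum_list lam) - 1)"
      using g(2,3) sum_g[of g "g (d + 1)"] by (simp add: algebra_simps)
    with g have "?coeff (g (d + 1))"
      unfolding d_def[symmetric] by (auto simp: algebra_simps)
    then show "\<exists>c. ?coeff c" ..
  next
    assume "\<exists>c. ?coeff c"
    then obtain c where c: "?coeff c" ..
    define g where "g k = (if k = d + 1 then c else x k - c * real (lam ! (k - 1)))" for k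
    have "\<forall>t\<in>{1..d}. x t = g t + c * real (lam ! (t - 1))" "g (d + 1) = c"
      unfolding g_def by auto
    moreover have "\<forall>k\<in>{1..d + 1}. 0 \<le> g k \<and> g k < 1"
      using c unfolding g_def d_def by auto
    ultimately show "in_Pi lam x"
      using c sum_g unfolding in_Pi_def d_def[symmetric] by auto
  qed
qed

lemma P_le_iff_ceiling_diff:
  assumes "sum_list lam = n" "2 \<le> n"
  shows "P_le lam n i j \<longleftrightarrow> i \<le> j \<and> j < i + (n - 1) \<and>
    (\<forall>t\<in>{1..length lam}.
       \<lceil>real j * real (lam ! (t - 1)) / real (n - 1)\<rceil> - \<lceil>real i * real (lam ! (t - 1)) / real (n - 1)\<rceil>
         = \<lceil>(real j - real i) * real (lam ! (t - 1)) / real (n - 1)\<rceil>)"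
proof -
  define N d where "N = n - 1" and "d = length lam"
  define L where "L t = real (lam ! (t - 1))" for t
  define C where "C b t = \<lceil>real b * L t / real N\<rceil>" for b t
  define x where "x k = real_of_int (pt lam n j k - pt lam n i k)" for k
  define c where "c = (real j - real i) / real N"
  have N: "0 < N" "real (sum_list lam) - 1 = real N"
    using assms unfolding N_def by auto
  have x_pos: "x t = real_of_int (C j t - C i t)" if "t \<in> {1..d}" for t
    using that unfolding x_def C_def pt_def L_def N_def d_def by auto
  have "x 0 = (\<Sum>t=1..d. real_of_int (C j t - C i t)) - (real j - real i)"
    unfolding x_def pt_def C_def L_def N_def d_def by (simp add: sum_subtractf)
  also have "(\<Sum>t=1..d. real_of_int (C j t - C i t)) = (\<Sum>t=1..d. x t)"
    using x_pos by (intro sum.cong) auto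
  finally have x_zero: "x 0 = (\<Sum>t=1..d. x t) - c * real N"
    using N unfolding c_def by simp
  have coeff_unique: "x 0 = (\<Sum>t=1..d. x t) - c' * real N \<longleftrightarrow> c' = c" for c'
    using N x_zero by auto
  have frac_iff_ceiling: "0 \<le> x t - c * L t \<and> x t - c * L t < 1 \<longleftrightarrow> C j t - C i t = \<lceil>c * L t\<rceil>"
    if "t \<in> {1..d}" for t
    unfolding x_pos[OF that] ceiling_eq_iff by linarith
  have "0 \<le> c \<and> c < 1 \<longleftrightarrow> i \<le> j \<and> j < i + N"
    using N unfolding c_def by (auto simp: divide_simps)
  moreover have "c * L t = (real j - real i) * L t / real N" for t
    unfolding c_def by simp
  ultimately have "(\<exists>c'. 0 \<le> c' \<and> c' < 1 \<and>
       (\<forall>t\<in>{1..d}. 0 \<le> x t - c' * L t \<and> x t - c' * L t < 1) \<and>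
       x 0 = (\<Sum>t=1..d. x t) - c' * real N) \<longleftrightarrow>
     i \<le> j \<and> j < i + N \<and> (\<forall>t\<in>{1..d}. C j t - C i t = \<lceil>(real j - real i) * L t / real N\<rceil>)"
    unfolding coeff_unique using frac_iff_ceiling by auto
  then show ?thesis
    unfolding P_le_def in_Pi_iff N(2) by (simp add: x_def C_def L_def N_def d_def)
qed

theorem corollary2p18:
  fixes n :: nat and lam :: "nat list" and i j :: nat
  assumes "n \<ge> 2"
    and "is_partition n lam"
    and "\<forall>t\<in>{1..length lam}. gcd (n - 1) (lam ! (t - 1)) = 1"
    and "i \<in> {1..n-2}" and "j \<in> {1..n-2}" and "i \<noteq> j"
  shows "P_le lam n i j \<longleftrightarrow>
    (i < j \<and> (\<forall>t\<in>{1..length lam}. s_rem lam n t i > s_rem lam n t j \<and> s_rem lam n t j > 0))"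
proof -
  define N where "N = n - 1"
  have bounds: "0 < N" "0 < i" "i < N" "0 < j" "j < N"
    using assms(1,4,5) unfolding N_def by auto
  have coprime: "coprime N (lam ! (t - 1))" if "t \<in> {1..length lam}" for t
    using assms(3) that unfolding N_def by (simp add: coprime_iff_gcd_eq_1)
  have ceiling_diff_iff: "\<lceil>real j * real (lam ! (t - 1)) / real N\<rceil> - \<lceil>real i * real (lam ! (t - 1)) / real N\<rceil>
      = \<lceil>(real j - real i) * real (lam ! (t - 1)) / real N\<rceil>
      \<longleftrightarrow> s_rem lam n t j < s_rem lam n t i"
    if "t \<in> {1..length lam}" "i < j" for t
    unfolding s_rem_def N_def[symmetric]
    using ceiling_diff_eq_iff_mod_less[OF bounds(1)
        coprime_mult_mod_pos[OF coprime[OF that(1)] bounds(2,3)]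
        coprime_mult_mod_pos[OF coprime[OF that(1)] bounds(4,5)]
        coprime_mult_mod_inj[OF coprime[OF that(1)] that(2) bounds(5)]] .
  have "sum_list lam = n"
    using assms(2) unfolding is_partition_def by simp
  then have "P_le lam n i j \<longleftrightarrow> i < j \<and>
      (\<forall>t\<in>{1..length lam}. s_rem lam n t j < s_rem lam n t i)"
    using P_le_iff_ceiling_diff[of lam n i j] assms(1,6) bounds ceiling_diff_iff
    unfolding N_def by auto
  moreover have "0 < s_rem lam n t j" if "t \<in> {1..length lam}" for t
    unfolding s_rem_def N_def[symmetric] using coprime_mult_mod_pos[OF coprime[OF that]] bounds by simp
  ultimately show ?thesis by auto
qed

end
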